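(* Let $a \in \mathbb{R}$ and $w \in \mathbb{C}\setminus\{0\}$ with $(a,w) \in D_c$. Then the equation $z + a - w e^{-\tau z} = 0$ with $\tau = \tau_c(a,w)$ has no roots with positive real part and has at least one root on the imaginary axis.
   Context: $D_c := \{(a,w) \in \mathbb{R}\times(\mathbb{C}\setminus\{0\}) : \operatorname{Re}(w) < a < |w|\}$. For $(a,w) \in D_c$, $\tau_c(a,w) := \frac{1}{\sqrt{|w|^2-a^2}}\left[|\operatorname{Arg}(w)| - \arccos(a/|w|)\right] > 0$, where $\operatorname{Arg}(w)\in(-\pi,\pi]$ is the principal argument and $\arccos:[-1,1]\to[0,\pi]$. *)

theory Defs
  imports "HOL-Analysis.Analysis"
begin

definition D_c :: "(real \<times> complex) set" where
  "D_c = {(a, w). w \<noteq> 0 \<and> Re w < a \<and> a < cmod w}"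

definition tau_c :: "real \<Rightarrow> complex \<Rightarrow> real" where
  "tau_c a w = (\<bar>Arg w\<bar> - arccos (a / cmod w)) / sqrt ((cmod w)^2 - a^2)"

end

theory Submission
  imports Defs "HOL-Complex_Analysis.Complex_Analysis"
begin

(*
  Let F t z = z + a - w e^(-t z) be the characteristic function.  For t = 0 the only root is
  w - a, which lies in the open left half-plane because Re w < a.  A root i y on the imaginary
  axis forces y = +-sqrt(|w|^2 - a^2) and Arg w - t y = +-arccos(a/|w|) modulo 2 pi; for
  0 <= t < tau_c this is impossible, while at t = tau_c it holds with y of the sign of Arg w.
  Roots of F t with nonnegative real part satisfy |z| <= |a| + |w|, and F t depends uniformly
  continuously on t on compact sets.  Hence, by the maximum modulus principle applied to 1 / F s,
  a root with positive real part survives small changes of t, and so does the absence of roots in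
  the closed right half-plane.  So "F t has no root with positive real part" is locally constant
  on the connected set [0, tau_c), true at 0, and by the first persistence statement also true at
  tau_c.
*)

lemma uniformly_close_in_parameter:
  fixes f :: "real \<Rightarrow> 'a::metric_space \<Rightarrow> 'b::metric_space"
  assumes "continuous_on UNIV (\<lambda>x. f (fst x) (snd x))" "compact K" "0 < \<epsilon>"
  obtains \<delta> where "0 < \<delta>" "\<And>s z. \<bar>s - t\<bar> < \<delta> \<Longrightarrow> z \<in> K \<Longrightarrow> dist (f s z) (f t z) < \<epsilon>"
proof -
  have "uniformly_continuous_on (cball t 1 \<times> K) (\<lambda>x. f (fst x) (snd x))"
    using assms(1,2) by (intro compact_uniformly_continuous compact_Times)
      (auto intro: continuous_on_subset)
  then obtain d where "0 < d" and d: "\<And>x x'. x \<in> cball t 1 \<times> K \<Longrightarrow> x' \<in> cball t 1 \<times> K \<Longrightarrow>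
      dist x' x < d \<Longrightarrow> dist (f (fst x') (snd x')) (f (fst x) (snd x)) < \<epsilon>"
    using assms(3) unfolding uniformly_continuous_on_def by metis
  show ?thesis
  proof (rule that)
    show "0 < min d 1" using \<open>0 < d\<close> by simp
    fix s z assume "\<bar>s - t\<bar> < min d 1" "z \<in> K"
    then show "dist (f s z) (f t z) < \<epsilon>"
      using d[of "(t, z)" "(s, z)"] by (auto simp: dist_Pair_Pair dist_real_def)
  qed
qed

lemma zero_persists_under_perturbation:
  fixes f g :: "complex \<Rightarrow> complex"
  assumes "0 < \<rho>" "g holomorphic_on ball z0 \<rho>" "continuous_on (cball z0 \<rho>) g"
    and "f z0 = 0" "\<And>z. z \<in> sphere z0 \<rho> \<Longrightarrow> m \<le> norm (f z)"
    and close: "\<And>z. z \<in> cball z0 \<rho> \<Longrightarrow> norm (g z - f z) < m / 2"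
  shows "\<exists>z\<in>cball z0 \<rho>. g z = 0"
proof (rule ccontr)
  assume "\<not> ?thesis"
  then have nz: "g z \<noteq> 0" if "z \<in> cball z0 \<rho>" for z
    using that by blast
  have "norm (g z0) < m / 2"
    using close[of z0] assms(1,4) by simp
  then have "0 < m"
    using norm_ge_zero[of "g z0"] by linarith
  have "norm (inverse (g z0)) \<le> 2 / m"
  proof (rule maximum_modulus_frontier[of "\<lambda>z. inverse (g z)" "cball z0 \<rho>"])
    show "(\<lambda>z. inverse (g z)) holomorphic_on interior (cball z0 \<rho>)"
      using assms(2) nz by (auto intro!: holomorphic_intros)
    show "continuous_on (closure (cball z0 \<rho>)) (\<lambda>z. inverse (g z))"
      using assms(3) nz by (auto intro!: continuous_intros)
    fix z assume "z \<in> frontier (cball z0 \<rho>)"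
    then have "z \<in> sphere z0 \<rho>" using assms(1) by simp
    then have "m \<le> norm (f z)" "norm (g z - f z) < m / 2"
      using assms(5) close by auto
    then have "m / 2 < norm (g z)"
      using norm_triangle_ineq2[of "f z" "g z"] by (simp add: norm_minus_commute)
    with \<open>0 < m\<close> show "norm (inverse (g z)) \<le> 2 / m"
      by (simp add: norm_inverse norm_divide divide_simps)
  qed (use assms(1) in auto)
  moreover have "0 < norm (g z0)" using nz assms(1) by simp
  ultimately have "m / 2 \<le> norm (g z0)"
    using \<open>0 < m\<close> by (simp add: norm_divide field_simps)
  with \<open>norm (g z0) < m / 2\<close> show False by simp
qed

definition char_fun :: "real \<Rightarrow> complex \<Rightarrow> real \<Rightarrow> complex \<Rightarrow> complex" where
  "char_fun a w t z = z + of_real a - w * exp (- of_real t * z)"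

lemma char_fun_imaginary_axis:
  "char_fun a w t (\<i> * of_real y) =
     Complex (a - cmod w * cos (Arg w - t * y)) (y - cmod w * sin (Arg w - t * y))"
proof -
  have "w * exp (- of_real t * (\<i> * of_real y)) = rcis (cmod w) (Arg w) * cis (- (t * y))"
    by (simp add: rcis_cmod_Arg cis_conv_exp mult_ac)
  also have "\<dots> = rcis (cmod w) (Arg w - t * y)"
    by (simp add: rcis_def cis_mult)
  finally show ?thesis
    by (simp add: char_fun_def complex_eq_iff rcis_def)
qed

lemma D_c_polar:
  assumes "(a, w) \<in> D_c"
  defines "\<phi> \<equiv> arccos (a / cmod w)" and "\<omega> \<equiv> sqrt ((cmod w)\<^sup>2 - a\<^sup>2)"
  shows "a = cmod w * cos \<phi>" "\<omega> = cmod w * sin \<phi>" "0 < \<phi>" "\<phi> < \<bar>Arg w\<bar>" "0 < \<omega>"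
proof -
  have w0: "w \<noteq> 0" and lt: "Re w < a" "a < cmod w"
    using assms(1) by (auto simp: D_c_def)
  have "- cmod w \<le> Re w"
    using abs_Re_le_cmod[of w] by linarith
  then have ratio: "-1 < a / cmod w" "a / cmod w < 1"
    using w0 lt by (auto simp: field_simps)
  then show a: "a = cmod w * cos \<phi>"
    using w0 by (simp add: \<phi>_def)
  have "\<omega> = sqrt ((cmod w)\<^sup>2 * (1 - (a / cmod w)\<^sup>2))"
    using w0 by (simp add: \<omega>_def field_simps)
  also have "\<dots> = cmod w * sin \<phi>"
    using ratio by (simp add: real_sqrt_mult \<phi>_def sin_arccos)
  finally show \<omega>: "\<omega> = cmod w * sin \<phi>" .
  have \<phi>: "0 < \<phi>" "\<phi> < pi"
    using ratio by (auto simp: \<phi>_def arccos_lt_bounded)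
  then show "0 < \<phi>" by simp
  have "Re w = cmod w * cos (Arg w)"
    by (metis Re_rcis rcis_cmod_Arg)
  then have "cos \<bar>Arg w\<bar> < cos \<phi>"
    using lt a w0 by (simp add: cos_abs_real)
  then show "\<phi> < \<bar>Arg w\<bar>"
    using \<phi> Arg_bounded[of w] by (subst (asm) cos_mono_less_eq) auto
  show "0 < \<omega>"
    using \<omega> \<phi> w0 by (simp add: sin_gt_zero)
qed

lemma imaginary_root_angle:
  assumes "(a, w) \<in> D_c" "char_fun a w t (\<i> * of_real y) = 0"
  defines "\<phi> \<equiv> arccos (a / cmod w)" and "\<omega> \<equiv> sqrt ((cmod w)\<^sup>2 - a\<^sup>2)"
  obtains \<sigma> :: real and n :: int
  where "\<sigma> = 1 \<or> \<sigma> = -1" "y = \<sigma> * \<omega>" "Arg w - t * y = \<sigma> * \<phi> + 2 * pi * n"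
proof -
  note polar = D_c_polar[OF assms(1), folded \<phi>_def \<omega>_def]
  define \<psi> where "\<psi> = Arg w - t * y"
  have a: "a = cmod w * cos \<psi>" and y: "y = cmod w * sin \<psi>"
    using assms(2) by (simp_all add: char_fun_imaginary_axis complex_eq_iff \<psi>_def)
  have "y\<^sup>2 + a\<^sup>2 = (cmod w)\<^sup>2 * ((sin \<psi>)\<^sup>2 + (cos \<psi>)\<^sup>2)"
    using a y by (simp add: power_mult_distrib flip: distrib_left)
  moreover have "\<omega>\<^sup>2 + a\<^sup>2 = (cmod w)\<^sup>2 * ((sin \<phi>)\<^sup>2 + (cos \<phi>)\<^sup>2)"
    using polar(1,2) by (simp add: power_mult_distrib flip: distrib_left)
  ultimately have "y\<^sup>2 = \<omega>\<^sup>2"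
    by simp
  then have "y = \<omega> \<or> y = - \<omega>"
    by (simp add: power2_eq_iff)
  then obtain \<sigma> :: real where \<sigma>: "\<sigma> = 1 \<or> \<sigma> = -1" "y = \<sigma> * \<omega>"
    by fastforce
  have "cmod w * sin \<psi> = cmod w * sin (\<sigma> * \<phi>)" "cmod w * cos \<psi> = cmod w * cos (\<sigma> * \<phi>)"
    using \<sigma> a y polar(1,2) by auto
  moreover have "w \<noteq> 0"
    using assms(1) by (simp add: D_c_def)
  ultimately have "sin \<psi> = sin (\<sigma> * \<phi>) \<and> cos \<psi> = cos (\<sigma> * \<phi>)"
    by simp
  then obtain n :: int where "\<psi> = \<sigma> * \<phi> + 2 * pi * n"
    by (auto simp: sin_cos_eq_iff)
  with \<sigma> show ?thesis
    using that \<psi>_def by blast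
qed

lemma no_imaginary_root_below_tau_c:
  assumes "(a, w) \<in> D_c" "0 \<le> t" "t < tau_c a w"
  shows "char_fun a w t (\<i> * of_real y) \<noteq> 0"
proof
  define \<phi> where "\<phi> = arccos (a / cmod w)"
  define \<omega> where "\<omega> = sqrt ((cmod w)\<^sup>2 - a\<^sup>2)"
  note polar = D_c_polar[OF assms(1), folded \<phi>_def \<omega>_def]
  assume "char_fun a w t (\<i> * of_real y) = 0"
  then obtain \<sigma> :: real and n :: int
    where \<sigma>: "\<sigma> = 1 \<or> \<sigma> = -1" "y = \<sigma> * \<omega>" and n: "Arg w - t * y = \<sigma> * \<phi> + 2 * pi * n"
    using imaginary_root_angle[OF assms(1)] unfolding \<phi>_def \<omega>_def by metis
  have t\<omega>: "0 \<le> t * \<omega>" "t * \<omega> < \<bar>Arg w\<bar> - \<phi>"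
    using assms(2,3) polar(5) by (simp_all add: tau_c_def \<phi>_def \<omega>_def pos_less_divide_eq)
  define N where "N = 2 * pi * n"
  have N: "N = Arg w - \<sigma> * (t * \<omega>) - \<sigma> * \<phi>"
    using n \<sigma>(2) by (simp add: N_def algebra_simps)
  have "-2 * pi < N \<and> N < 2 * pi \<and> N \<noteq> 0"
    using \<sigma>(1) N t\<omega> polar(3) Arg_bounded[of w] by (cases "0 \<le> Arg w"; elim disjE; simp)
  then have "pi * (-1) < pi * n" "pi * n < pi * 1" "n \<noteq> 0"
    by (simp_all add: N_def)
  then have "-1 < n" "n < 1" "n \<noteq> 0"
    by (simp_all only: mult_less_cancel_left_pos[OF pi_gt_zero] of_int_less_iff of_int_minus of_int_1)
  then show False
    by linarith
qed

lemma imaginary_root_at_tau_c: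
  assumes "(a, w) \<in> D_c"
  shows "\<exists>y. char_fun a w (tau_c a w) (\<i> * of_real y) = 0"
proof -
  define \<phi> where "\<phi> = arccos (a / cmod w)"
  define \<omega> where "\<omega> = sqrt ((cmod w)\<^sup>2 - a\<^sup>2)"
  note polar = D_c_polar[OF assms(1), folded \<phi>_def \<omega>_def]
  define \<sigma> :: real where "\<sigma> = (if 0 \<le> Arg w then 1 else -1)"
  have "tau_c a w * \<omega> = \<bar>Arg w\<bar> - \<phi>"
    using polar(5) by (simp add: tau_c_def \<phi>_def \<omega>_def)
  then have "Arg w - tau_c a w * (\<sigma> * \<omega>) = \<sigma> * \<phi>"
    by (auto simp: \<sigma>_def abs_if algebra_simps)
  then have "char_fun a w (tau_c a w) (\<i> * of_real (\<sigma> * \<omega>)) = 0"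
    unfolding char_fun_imaginary_axis using polar(1,2)
    by (auto simp: complex_eq_iff \<sigma>_def)
  then show ?thesis ..
qed

lemma char_fun_continuous: "continuous_on UNIV (\<lambda>x. char_fun a w (fst x) (snd x))"
  unfolding char_fun_def by (intro continuous_intros)

lemma char_fun_holomorphic: "char_fun a w t holomorphic_on S"
  unfolding char_fun_def by (intro holomorphic_intros)

lemma char_fun_root_norm_le:
  assumes "0 \<le> t" "0 \<le> Re z" "char_fun a w t z = 0"
  shows "norm z \<le> \<bar>a\<bar> + norm w"
proof -
  have "z = w * exp (- of_real t * z) - of_real a"
    using assms(3) by (simp add: char_fun_def algebra_simps)
  then have "norm z \<le> norm w * norm (exp (- of_real t * z)) + \<bar>a\<bar>"
    by (metis norm_mult norm_of_real norm_triangle_ineq4)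
  moreover have "norm (exp (- of_real t * z)) \<le> 1"
    using assms(1,2) by simp
  then have "norm w * norm (exp (- of_real t * z)) \<le> norm w"
    by (simp add: mult_left_le)
  ultimately show ?thesis
    by linarith
qed

lemma char_fun_right_root_persists:
  assumes "0 \<le> t" "char_fun a w t z0 = 0" "0 < Re z0"
  obtains \<delta> where "0 < \<delta>" "\<And>s. \<bar>s - t\<bar> < \<delta> \<Longrightarrow> \<exists>z. 0 < Re z \<and> char_fun a w s z = 0"
proof -
  have "char_fun a w t (of_real (\<bar>a\<bar> + norm w + 1)) \<noteq> 0"
    using char_fun_root_norm_le[OF assms(1), where z = "of_real (\<bar>a\<bar> + norm w + 1)" and a = a and w = w]
    by (auto simp only: norm_of_real Re_complex_of_real) auto
  then obtain e where "0 < e" and e: "\<And>z. z \<in> ball z0 e - {z0} \<Longrightarrow> char_fun a w t z \<noteq> 0"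
    using isolated_zeros[OF char_fun_holomorphic open_UNIV connected_UNIV _ assms(2)] by blast
  define \<rho> where "\<rho> = min (e / 2) (Re z0 / 2)"
  have "0 < \<rho>"
    using \<open>0 < e\<close> assms(3) by (simp add: \<rho>_def)
  have sphere_nonzero: "char_fun a w t z \<noteq> 0" if "z \<in> sphere z0 \<rho>" for z
  proof -
    have "dist z0 z = \<rho>"
      using that by simp
    then have "z \<noteq> z0" "dist z0 z < e"
      using \<open>0 < \<rho>\<close> \<open>0 < e\<close> by (auto simp: \<rho>_def)
    then show ?thesis
      using e by simp
  qed
  have cball_right: "0 < Re z" if "z \<in> cball z0 \<rho>" for z
    using that abs_Re_le_cmod[of "z0 - z"] assms(3) by (auto simp: \<rho>_def dist_norm)
  have "sphere z0 \<rho> \<noteq> {}"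
    using \<open>0 < \<rho>\<close> by simp
  then obtain zm where "zm \<in> sphere z0 \<rho>"
    and zm: "\<And>z. z \<in> sphere z0 \<rho> \<Longrightarrow> norm (char_fun a w t zm) \<le> norm (char_fun a w t z)"
    using continuous_attains_inf[OF compact_sphere _ continuous_on_norm
        [OF holomorphic_on_imp_continuous_on[OF char_fun_holomorphic]]]
    by blast
  define m where "m = norm (char_fun a w t zm)"
  have "0 < m"
    using sphere_nonzero[OF \<open>zm \<in> sphere z0 \<rho>\<close>] by (simp add: m_def)
  then obtain \<delta> where "0 < \<delta>" and \<delta>: "\<And>s z. \<bar>s - t\<bar> < \<delta> \<Longrightarrow> z \<in> cball z0 \<rho> \<Longrightarrow>
      dist (char_fun a w s z) (char_fun a w t z) < m / 2"
    using uniformly_close_in_parameter[OF char_fun_continuous compact_cball, of "m / 2"]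
    by (metis half_gt_zero)
  show ?thesis
  proof (rule that[OF \<open>0 < \<delta>\<close>])
    fix s assume "\<bar>s - t\<bar> < \<delta>"
    have "\<exists>z\<in>cball z0 \<rho>. char_fun a w s z = 0"
    proof (rule zero_persists_under_perturbation[where f = "char_fun a w t" and m = m])
      show "char_fun a w s holomorphic_on ball z0 \<rho>" "continuous_on (cball z0 \<rho>) (char_fun a w s)"
        by (simp_all add: char_fun_holomorphic holomorphic_on_imp_continuous_on)
      show "\<And>z. z \<in> cball z0 \<rho> \<Longrightarrow> norm (char_fun a w s z - char_fun a w t z) < m / 2"
        using \<delta>[OF \<open>\<bar>s - t\<bar> < \<delta>\<close>] by (simp add: dist_norm)
    qed (use \<open>0 < \<rho>\<close> assms(2) zm in \<open>auto simp: m_def\<close>)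
    then show "\<exists>z. 0 < Re z \<and> char_fun a w s z = 0"
      using cball_right by blast
  qed
qed

lemma char_fun_no_right_root_persists:
  assumes "\<And>z. 0 \<le> Re z \<Longrightarrow> char_fun a w t z \<noteq> 0"
  obtains \<delta> where "0 < \<delta>"
    "\<And>s z. \<bar>s - t\<bar> < \<delta> \<Longrightarrow> 0 \<le> s \<Longrightarrow> char_fun a w s z = 0 \<Longrightarrow> Re z \<le> 0"
proof -
  define K where "K = {z. 0 \<le> Re z} \<inter> cball 0 (\<bar>a\<bar> + norm w)"
  have "compact K"
    unfolding K_def by (intro closed_Int_compact closed_halfspace_Re_ge compact_cball)
  moreover have "0 \<in> K"
    by (simp add: K_def)
  ultimately obtain zm where "zm \<in> K"
    and zm: "\<And>z. z \<in> K \<Longrightarrow> norm (char_fun a w t zm) \<le> norm (char_fun a w t z)"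
    using continuous_attains_inf[OF \<open>compact K\<close> _ continuous_on_norm
        [OF holomorphic_on_imp_continuous_on[OF char_fun_holomorphic]]]
    by blast
  define m where "m = norm (char_fun a w t zm)"
  have "0 < m"
    using assms \<open>zm \<in> K\<close> by (simp add: m_def K_def)
  then obtain \<delta> where "0 < \<delta>" and \<delta>: "\<And>s z. \<bar>s - t\<bar> < \<delta> \<Longrightarrow> z \<in> K \<Longrightarrow>
      dist (char_fun a w s z) (char_fun a w t z) < m"
    using uniformly_close_in_parameter[OF char_fun_continuous \<open>compact K\<close>] by metis
  show ?thesis
  proof (rule that[OF \<open>0 < \<delta>\<close>], rule ccontr)
    fix s z assume s: "\<bar>s - t\<bar> < \<delta>" "0 \<le> s" and root: "char_fun a w s z = 0" and "\<not> Re z \<le> 0"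
    then have "z \<in> K"
      using char_fun_root_norm_le[OF s(2) _ root] by (simp add: K_def)
    then show False
      using zm[of z] \<delta>[OF s(1) \<open>z \<in> K\<close>] by (simp add: m_def dist_norm root)
  qed
qed

lemma tau_c_pos:
  assumes "(a, w) \<in> D_c"
  shows "0 < tau_c a w"
  using D_c_polar[OF assms] by (simp add: tau_c_def)

lemma no_right_root_below_tau_c:
  assumes D: "(a, w) \<in> D_c" and t: "0 \<le> t" "t < tau_c a w"
    and root: "char_fun a w t z = 0"
  shows "Re z \<le> 0"
proof -
  define P where "P = (\<lambda>t. \<forall>z. char_fun a w t z = 0 \<longrightarrow> Re z \<le> 0)"
  have "P 0"
    using D by (auto simp: P_def char_fun_def D_c_def algebra_simps)
  have locally_constant: "\<exists>\<delta>>0. \<forall>s\<in>{0..<tau_c a w}. \<bar>s - x\<bar> < \<delta> \<longrightarrow> P s = P x"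
    if x: "x \<in> {0..<tau_c a w}" for x
  proof (cases "P x")
    case True
    have "char_fun a w x z \<noteq> 0" if "0 \<le> Re z" for z
    proof (cases "Re z = 0")
      case True
      then have "z = \<i> * of_real (Im z)"
        by (simp add: complex_eq_iff)
      then show ?thesis
        using no_imaginary_root_below_tau_c[OF D] x by (metis atLeastLessThan_iff)
    qed (use \<open>P x\<close> that in \<open>auto simp: P_def\<close>)
    then obtain \<delta> where "0 < \<delta>"
      "\<And>s z. \<bar>s - x\<bar> < \<delta> \<Longrightarrow> 0 \<le> s \<Longrightarrow> char_fun a w s z = 0 \<Longrightarrow> Re z \<le> 0"
      using char_fun_no_right_root_persists by metis
    with True show ?thesis
      by (auto simp: P_def)
  next
    case False
    then obtain z0 where "char_fun a w x z0 = 0" "0 < Re z0"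
      by (auto simp: P_def)
    then obtain \<delta> where "0 < \<delta>" "\<And>s. \<bar>s - x\<bar> < \<delta> \<Longrightarrow> \<exists>z. 0 < Re z \<and> char_fun a w s z = 0"
      using char_fun_right_root_persists x by (metis atLeastLessThan_iff)
    then have "\<not> P s" if "\<bar>s - x\<bar> < \<delta>" for s
      using that by (force simp: P_def)
    with False \<open>0 < \<delta>\<close> show ?thesis
      by blast
  qed
  have "P t"
  proof (rule connected_induction_simple[of "{0..<tau_c a w}" 0 t P])
    fix x assume "x \<in> {0..<tau_c a w}"
    then obtain \<delta> where "0 < \<delta>" and \<delta>: "\<forall>s\<in>{0..<tau_c a w}. \<bar>s - x\<bar> < \<delta> \<longrightarrow> P s = P x"
      using locally_constant by blast
    define T where "T = {0..<tau_c a w} \<inter> ball x \<delta>"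
    have "openin (top_of_set {0..<tau_c a w}) T"
      by (simp add: T_def openin_open_Int)
    moreover have "x \<in> T"
      using \<open>x \<in> {0..<tau_c a w}\<close> \<open>0 < \<delta>\<close> by (simp add: T_def)
    moreover have "P y = P x" if "y \<in> T" for y
    proof -
      have "\<bar>y - x\<bar> < \<delta>"
        using that by (metis IntD2 T_def dist_commute dist_real_def mem_ball)
      then show ?thesis
        using \<delta> that by (simp only: T_def IntD1)
    qed
    ultimately show "\<exists>T. openin (top_of_set {0..<tau_c a w}) T \<and> x \<in> T \<and> (\<forall>y\<in>T. \<forall>y'\<in>T. P y \<longrightarrow> P y')"
      by blast
  qed (use t \<open>P 0\<close> in auto)
  with root show ?thesis
    by (simp add: P_def)
qed

lemma no_right_root_at_tau_c:
  assumes D: "(a, w) \<in> D_c" and root: "char_fun a w (tau_c a w) z = 0"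
  shows "Re z \<le> 0"
proof (rule ccontr)
  assume "\<not> Re z \<le> 0"
  then obtain \<delta> where "0 < \<delta>"
    and \<delta>: "\<And>s. \<bar>s - tau_c a w\<bar> < \<delta> \<Longrightarrow> \<exists>z. 0 < Re z \<and> char_fun a w s z = 0"
    using char_fun_right_root_persists[OF less_imp_le[OF tau_c_pos[OF D]] root] by auto
  define s where "s = tau_c a w - min (\<delta> / 2) (tau_c a w / 2)"
  have "0 \<le> s" "s < tau_c a w" "\<bar>s - tau_c a w\<bar> < \<delta>"
    using tau_c_pos[OF D] \<open>0 < \<delta>\<close> by (auto simp: s_def)
  then show False
    using \<delta> no_right_root_below_tau_c[OF D] by (meson not_le)
qed

theorem mainTheorem2:
  fixes a :: real and w :: complex
  assumes "w \<noteq> 0" and "(a, w) \<in> D_c"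
  shows "(\<forall>z::complex. z + of_real a - w * exp (- of_real (tau_c a w) * z) = 0 \<longrightarrow> Re z \<le> 0)
       \<and> (\<exists>z::complex. Re z = 0 \<and> z + of_real a - w * exp (- of_real (tau_c a w) * z) = 0)"
proof
  show "\<forall>z. z + of_real a - w * exp (- of_real (tau_c a w) * z) = 0 \<longrightarrow> Re z \<le> 0"
    using no_right_root_at_tau_c[OF assms(2)] by (simp add: char_fun_def)
  obtain y where "char_fun a w (tau_c a w) (\<i> * of_real y) = 0"
    using imaginary_root_at_tau_c[OF assms(2)] by blast
  then show "\<exists>z. Re z = 0 \<and> z + of_real a - w * exp (- of_real (tau_c a w) * z) = 0"
    by (intro exI[of _ "\<i> * of_real y"]) (simp add: char_fun_def)
qed

end
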